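(* For every $0\le\varepsilon\le1$, $$L^*_{\mathrm{avg}}(\varepsilon,X,Y)=\mathbb{E}\big[\langle\lfloor\log\varsigma_Y^{-1}(X)\rfloor\rangle_\varepsilon\big],$$ where $\varsigma_Y$ is a ($\sigma(Y)$-measurable) random permutation of $\mathcal X=\{1,2,\dots\}$ with $P_{X|Y}(\varsigma_Y(1)\mid Y)\ge P_{X|Y}(\varsigma_Y(2)\mid Y)\ge\cdots$ a.s.
   Context: $\mathcal{X}=\{1,2,\dots\}$, $\mathcal{Y}$ an arbitrary measurable space, $X$ an $\mathcal{X}$-valued and $Y$ a $\mathcal{Y}$-valued random variable; logarithms are base 2; $P_{X|Y}(x\mid Y)$ is a version of $\mathbb{P}\{X=x\mid Y\}$. Unconditional $\varepsilon$-cutoff of a real random variable $Z$: $\langle Z\rangle_\varepsilon := Z$ if $Z<\eta$, $:= BZ$ if $Z=\eta$, $:=0$ if $Z>\eta$, where $B$ is Bernoulli with $\mathbb{P}\{B=1\}=1-\beta$ independent of $Z$, and $\eta\in\mathbb{R}$ ($\eta=+\infty$ allowed when needed), $0\le\beta<1$ satisfy $\mathbb{P}\{Z>\eta\}+\beta\mathbb{P}\{Z=\eta\}=\varepsilon$. Codes (one-shot): $\{0,1\}^*$ is the set of finite binary strings including the empty string, $\ell$ the length function. A variable-length stochastic code is a pair of random (possibly randomized) maps $F:\mathcal X\times\mathcal Y\to\{0,1\}^*$, $G:\{0,1\}^*\times\mathcal Y\to\mathcal X$ such that $F(X,Y)$ and $G(F(X,Y),Y)$ are random variables. It is an $(L,\varepsilon)_{\mathrm{avg}}$-code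 if $\mathbb{E}[\ell(F(X,Y))]\le L$ and $\mathbb{P}\{X\ne G(F(X,Y),Y)\}\le\varepsilon$. $L^*_{\mathrm{avg}}(\varepsilon,X,Y):=\inf\{L>0:\text{an }(L,\varepsilon)_{\mathrm{avg}}\text{-code exists}\}$. *)

theory Defs
  imports "HOL-Probability.Probability"
begin

text \<open>Alphabet X = {1,2,...} is represented by the naturals \<open>\<ge> 1\<close>; binary strings are
  \<open>bool list\<close>.  A stochastic encoder is a kernel \<open>F x y\<close> (a pmf on strings),
  a stochastic decoder is a kernel \<open>G w y\<close> (a pmf on X).\<close>

definition cond_pmf :: "'a measure \<Rightarrow> ('a \<Rightarrow> nat) \<Rightarrow> ('a \<Rightarrow> 'b) \<Rightarrow> 'b measure \<Rightarrow> nat \<Rightarrow> 'a \<Rightarrow> real" where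
  "cond_pmf M X Y N x = real_cond_exp M (vimage_algebra (space M) Y N)
      (indicator {\<omega> \<in> space M. X \<omega> = x})"

definition avg_code :: "'a measure \<Rightarrow> ('a \<Rightarrow> nat) \<Rightarrow> ('a \<Rightarrow> 'b) \<Rightarrow> 'b measure \<Rightarrow> ennreal \<Rightarrow> real
    \<Rightarrow> (nat \<Rightarrow> 'b \<Rightarrow> bool list pmf) \<Rightarrow> (bool list \<Rightarrow> 'b \<Rightarrow> nat pmf) \<Rightarrow> bool" where
  "avg_code M X Y N L eps F G \<longleftrightarrow>
     (\<forall>x w. (\<lambda>y. pmf (F x y) w) \<in> borel_measurable N) \<and>
     (\<forall>w x. (\<lambda>y. pmf (G w y) x) \<in> borel_measurable N) \<and>
     (\<forall>w y. set_pmf (G w y) \<subseteq> {1..}) \<and>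
     (\<integral>\<^sup>+ \<omega>. (\<integral>\<^sup>+ w. ennreal (real (length w)) \<partial>measure_pmf (F (X \<omega>) (Y \<omega>))) \<partial>M) \<le> L \<and>
     (\<integral>\<^sup>+ \<omega>. ennreal (measure_pmf.prob (bind_pmf (F (X \<omega>) (Y \<omega>)) (\<lambda>w. G w (Y \<omega>)))
                                       (UNIV - {X \<omega>})) \<partial>M) \<le> ennreal eps"

text \<open>L*_avg(eps,X,Y); infimum of the empty set is \<open>\<infinity>\<close>.\<close>
definition L_avg_star :: "'a measure \<Rightarrow> ('a \<Rightarrow> nat) \<Rightarrow> ('a \<Rightarrow> 'b) \<Rightarrow> 'b measure \<Rightarrow> real \<Rightarrow> ennreal" where
  "L_avg_star M X Y N eps =
     Inf {ennreal L | L. L > 0 \<and> (\<exists>F G. avg_code M X Y N (ennreal L) eps F G)}"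

text \<open>The eps-cutoff with parameters eta, and coin value b (B = 1 iff b).\<close>
definition cutoff :: "ereal \<Rightarrow> real \<Rightarrow> bool \<Rightarrow> real" where
  "cutoff \<eta> z b = (if ereal z < \<eta> then z else if ereal z = \<eta> then (if b then z else 0) else 0)"

definition cutoff_params :: "'a measure \<Rightarrow> ('a \<Rightarrow> real) \<Rightarrow> real \<Rightarrow> ereal \<Rightarrow> real \<Rightarrow> bool" where
  "cutoff_params M Z eps \<eta> \<beta> \<longleftrightarrow> \<eta> \<noteq> -\<infinity> \<and> 0 \<le> \<beta> \<and> \<beta> < 1 \<and>
     measure M {\<omega> \<in> space M. ereal (Z \<omega>) > \<eta>} + \<beta> * measure M {\<omega> \<in> space M. ereal (Z \<omega>) = \<eta>} = eps"

text \<open>E[<Z>_eps], B Bernoulli with P{B=1} = 1 - beta, independent of Z (product space).\<close>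
definition cutoff_exp :: "'a measure \<Rightarrow> ('a \<Rightarrow> real) \<Rightarrow> ereal \<Rightarrow> real \<Rightarrow> ennreal" where
  "cutoff_exp M Z \<eta> \<beta> =
     (\<integral>\<^sup>+ p. ennreal (cutoff \<eta> (Z (fst p)) (snd p)) \<partial>(M \<Otimes>\<^sub>M measure_pmf (bernoulli_pmf (1 - \<beta>))))"

end

theory Submission
  imports Defs
begin

text \<open>Order the values of X by decreasing conditional probability given Y and write R for
  the rank of X in this order, so that the statement is about Z = \<lfloor>log R\<rfloor>.
  Converse: there are only 2^(k+1) - 1 strings of length at most k, so given Y the
  probability of decoding X correctly from a codeword of length at most k is at most the
  conditional probability of the 2^(k+1) - 1 most likely values, i.e. that of Z \<le> k.
  Hence a code with error at most eps has P{length > k} \<ge> P{Z > k} - eps for every k, and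
  summing over k bounds its expected length below by \<Sum>k (P{Z > k} - eps)^+, which is
  exactly E[<Z>_eps].
  Achievability: describe R by its binary expansion with the leading 1 dropped (length Z),
  and send the empty string on the cutoff event.\<close>

section \<open>Binary code for positive integers\<close>

text \<open>The binary expansion of n, least significant bit first, with the leading 1 dropped:
  every string is a codeword and the codeword of n has length \<lfloor>log n\<rfloor>.\<close>
fun bin_enc :: "nat \<Rightarrow> bool list" where
  "bin_enc n = (if n \<le> 1 then [] else odd n # bin_enc (n div 2))"

fun bin_dec :: "bool list \<Rightarrow> nat" where
  "bin_dec [] = 1"
| "bin_dec (b # w) = 2 * bin_dec w + (if b then 1 else 0)"

declare bin_enc.simps[simp del]

lemma bin_enc_le_1: "n \<le> 1 \<Longrightarrow> bin_enc n = []"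
  by (subst bin_enc.simps) simp

lemma bin_enc_gt_1: "n > 1 \<Longrightarrow> bin_enc n = odd n # bin_enc (n div 2)"
  by (subst bin_enc.simps) simp

lemma bin_dec_bin_enc: "n \<ge> 1 \<Longrightarrow> bin_dec (bin_enc n) = n"
proof (induction n rule: less_induct)
  case (less n)
  show ?case
  proof (cases "n \<le> 1")
    case True
    with less show ?thesis by (simp add: bin_enc_le_1)
  next
    case False
    with less have "bin_dec (bin_enc (n div 2)) = n div 2" by simp
    with False show ?thesis by (simp add: bin_enc_gt_1)
  qed
qed

lemma length_bin_enc_bounds:
  "n \<ge> 1 \<Longrightarrow> 2 ^ length (bin_enc n) \<le> n \<and> n < 2 ^ (length (bin_enc n) + 1)"
proof (induction n rule: less_induct)
  case (less n)
  show ?case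
  proof (cases "n \<le> 1")
    case True
    with less show ?thesis by (simp add: bin_enc_le_1)
  next
    case False
    define l where "l = length (bin_enc (n div 2))"
    with less False have "2 ^ l \<le> n div 2" "n div 2 < 2 ^ (l + 1)" by auto
    then have "2 ^ Suc l \<le> n" "n < 2 ^ (Suc l + 1)" by simp_all
    moreover have "length (bin_enc n) = Suc l" using False unfolding l_def by (simp add: bin_enc_gt_1)
    ultimately show ?thesis by simp
  qed
qed

lemma floor_log_eq_length_bin_enc: "n \<ge> 1 \<Longrightarrow> \<lfloor>log 2 (real n)\<rfloor> = int (length (bin_enc n))"
  using floor_log_nat_eq_if[of 2 "length (bin_enc n)" n] length_bin_enc_bounds by simp

lemma length_bin_enc_le_iff: "n \<ge> 1 \<Longrightarrow> length (bin_enc n) \<le> k \<longleftrightarrow> n < 2 ^ (k + 1)"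
proof -
  assume "n \<ge> 1"
  then have lo: "2 ^ length (bin_enc n) \<le> n" and hi: "n < 2 ^ (length (bin_enc n) + 1)"
    using length_bin_enc_bounds by auto
  show ?thesis
  proof
    assume "length (bin_enc n) \<le> k"
    then have "(2::nat) ^ (length (bin_enc n) + 1) \<le> 2 ^ (k + 1)" by (intro power_increasing) auto
    with hi show "n < 2 ^ (k + 1)" by (rule less_le_trans)
  next
    assume "n < 2 ^ (k + 1)"
    with lo have "(2::nat) ^ length (bin_enc n) < 2 ^ (k + 1)" by (rule le_less_trans)
    then have "length (bin_enc n) < k + 1" by (rule power_less_imp_less_exp[rotated]) simp
    then show "length (bin_enc n) \<le> k" by simp
  qed
qed

section \<open>A rearrangement inequality\<close>

lemma antitone_from_1:
  fixes p :: "nat \<Rightarrow> real"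
  assumes "\<And>i. i \<ge> 1 \<Longrightarrow> p (Suc i) \<le> p i" "1 \<le> i" "i \<le> j"
  shows "p j \<le> p i"
  using assms(3)
proof (induction j rule: dec_induct)
  case (step j)
  with assms(1)[of j] assms(2) show ?case by simp
qed simp

lemma sum_weighted_le_sum_first:
  fixes p b :: "nat \<Rightarrow> real"
  assumes anti: "\<And>i. i \<ge> 1 \<Longrightarrow> p (Suc i) \<le> p i" and p0: "\<And>i. 0 \<le> p i"
    and b0: "\<And>i. 0 \<le> b i" and b1: "\<And>i. b i \<le> 1"
    and bs: "(\<Sum>i\<in>{1..m}. b i) \<le> real n" and n1: "n \<ge> 1"
  shows "(\<Sum>i\<in>{1..m}. p i * b i) \<le> (\<Sum>i\<in>{1..n}. p i)"
proof (cases "m \<le> n")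
  case True
  have "(\<Sum>i\<in>{1..m}. p i * b i) \<le> (\<Sum>i\<in>{1..m}. p i)"
    by (intro sum_mono) (use p0 b1 in \<open>simp add: mult_left_le\<close>)
  also have "\<dots> \<le> (\<Sum>i\<in>{1..n}. p i)" using True by (intro sum_mono2) (auto simp: p0)
  finally show ?thesis .
next
  case False
  have split: "{1..m} = {1..n} \<union> {Suc n..m}" "{1..n} \<inter> {Suc n..m} = {}" using False n1 by auto
  text \<open>Beyond n every p i is at most p n, and the weight available there is at most
    the deficit \<Sum>i\<le>n (1 - b i) of the first n terms.\<close>
  have "(\<Sum>i\<in>{Suc n..m}. p i * b i) \<le> (\<Sum>i\<in>{Suc n..m}. p n * b i)"
    using antitone_from_1[where p=p, OF anti n1] b0 by (intro sum_mono mult_right_mono) auto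
  also have "\<dots> = p n * (\<Sum>i\<in>{Suc n..m}. b i)" by (simp add: sum_distrib_left)
  also have "\<dots> \<le> p n * (real n - (\<Sum>i\<in>{1..n}. b i))"
    using bs split p0 by (intro mult_left_mono) (simp_all add: sum.union_disjoint)
  also have "\<dots> = (\<Sum>i\<in>{1..n}. p n * (1 - b i))"
    by (simp add: sum_subtractf sum_distrib_left algebra_simps)
  also have "\<dots> \<le> (\<Sum>i\<in>{1..n}. p i * (1 - b i))"
    using antitone_from_1[where p=p, OF anti] b1 by (intro sum_mono mult_right_mono) auto
  finally have "(\<Sum>i\<in>{Suc n..m}. p i * b i) \<le> (\<Sum>i\<in>{1..n}. p i * (1 - b i))" .
  moreover have "(\<Sum>i\<in>{1..m}. p i * b i) = (\<Sum>i\<in>{1..n}. p i * b i) + (\<Sum>i\<in>{Suc n..m}. p i * b i)"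
    using split by (simp add: sum.union_disjoint)
  moreover have "(\<Sum>i\<in>{1..n}. p i * b i) + (\<Sum>i\<in>{1..n}. p i * (1 - b i)) = (\<Sum>i\<in>{1..n}. p i)"
    by (simp add: sum.distrib[symmetric] algebra_simps)
  ultimately show ?thesis by linarith
qed

lemma suminf_weighted_le_sum_first_bij:
  fixes s :: "nat \<Rightarrow> nat" and c a :: "nat \<Rightarrow> real"
  assumes bs: "bij_betw s {1..} {1..}" and anti: "\<And>i. i \<ge> 1 \<Longrightarrow> c (s (Suc i)) \<le> c (s i)"
    and c0: "\<And>x. 0 \<le> c x" and a0: "\<And>x. 0 \<le> a x" and a1: "\<And>x. a x \<le> 1" and az: "a 0 = 0"
    and as: "\<And>S. finite S \<Longrightarrow> (\<Sum>x\<in>S. a x) \<le> real n" and n1: "n \<ge> 1"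
  shows "(\<Sum>x. ennreal (c x * a x)) \<le> ennreal (\<Sum>i\<in>{1..n}. c (s i))"
proof (rule suminf_le_const[OF summableI])
  fix K
  define m where "m = Max (insert 1 (inv_into {1..} s ` {1..<K}))"
  have cover: "{1..<K} \<subseteq> s ` {1..m}"
  proof
    fix x assume x: "x \<in> {1..<K}"
    then have "x \<in> s ` {1..}" using bs by (auto simp: bij_betw_def)
    then have "inv_into {1..} s x \<in> {1..}" "s (inv_into {1..} s x) = x"
      by (rule inv_into_into, rule f_inv_into_f)
    moreover have "inv_into {1..} s x \<le> m" unfolding m_def using x by (intro Max_ge) auto
    ultimately show "x \<in> s ` {1..m}" by (metis atLeastAtMost_iff atLeast_iff image_eqI)
  qed
  have inj: "inj_on s {1..m}" using bs unfolding bij_betw_def by (auto intro: inj_on_subset)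
  have "(\<Sum>x<K. ennreal (c x * a x)) = (\<Sum>x\<in>{1..<K}. ennreal (c x * a x))"
    using az by (intro sum.mono_neutral_right) (auto simp: not_less_eq_eq)
  also have "\<dots> \<le> (\<Sum>x\<in>s ` {1..m}. ennreal (c x * a x))" using cover by (intro sum_mono2) auto
  also have "\<dots> = (\<Sum>i\<in>{1..m}. ennreal (c (s i) * a (s i)))" using inj by (simp add: sum.reindex)
  also have "\<dots> = ennreal (\<Sum>i\<in>{1..m}. c (s i) * a (s i))" using c0 a0 by (simp add: sum_nonneg)
  also have "\<dots> \<le> ennreal (\<Sum>i\<in>{1..n}. c (s i))"
  proof (intro ennreal_leI sum_weighted_le_sum_first[where p="\<lambda>i. c (s i)" and b="\<lambda>i. a (s i)"])
    show "(\<Sum>i\<in>{1..m}. a (s i)) \<le> real n"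
      using as[of "s ` {1..m}"] inj by (simp add: sum.reindex)
  qed (use anti c0 a0 a1 n1 in auto)
  finally show "(\<Sum>x<K. ennreal (c x * a x)) \<le> ennreal (\<Sum>i\<in>{1..n}. c (s i))" .
qed

section \<open>Ranking the values of X by their conditional probability\<close>

locale ranked_source = prob_space M for M :: "'a measure" +
  fixes X :: "'a \<Rightarrow> nat" and Y :: "'a \<Rightarrow> 'b" and N :: "'b measure" and \<sigma> :: "'a \<Rightarrow> nat \<Rightarrow> nat"
  assumes measurable_X[measurable]: "X \<in> measurable M (count_space UNIV)"
    and measurable_Y[measurable]: "Y \<in> measurable M N"
    and X_ge_1: "\<forall>\<omega>\<in>space M. X \<omega> \<ge> 1"
    and bij_\<sigma>: "\<forall>\<omega>\<in>space M. bij_betw (\<sigma> \<omega>) {1..} {1..}"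
    and measurable_\<sigma>_sigma_Y: "\<forall>i. (\<lambda>\<omega>. \<sigma> \<omega> i) \<in> measurable (vimage_algebra (space M) Y N) (count_space UNIV)"
    and \<sigma>_decreasing: "AE \<omega> in M. \<forall>i\<ge>1. cond_pmf M X Y N (\<sigma> \<omega> i) \<omega> \<ge> cond_pmf M X Y N (\<sigma> \<omega> (Suc i)) \<omega>"
begin

abbreviation "sigma_Y \<equiv> vimage_algebra (space M) Y N"
abbreviation "post x \<equiv> cond_pmf M X Y N x"

lemma Y_funcset: "Y \<in> space M \<rightarrow> space N"
  using measurable_Y by (auto simp: measurable_def)

lemma subalgebra_sigma_Y: "subalgebra M sigma_Y"
  unfolding subalgebra_def
  using sets_vimage_algebra2[OF Y_funcset] measurable_Y by (auto intro: measurable_sets)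

lemma sigma_finite_subalgebra_sigma_Y: "sigma_finite_subalgebra M sigma_Y"
  by (intro finite_measure_subalgebra_is_sigma_finite)
    (simp add: finite_measure_subalgebra_def finite_measure_subalgebra_axioms_def
      subalgebra_sigma_Y finite_measure_axioms)

lemma measurable_post[measurable]: "post x \<in> borel_measurable M"
  unfolding cond_pmf_def by simp

lemma post_nonneg: "AE \<omega> in M. \<forall>x. 0 \<le> post x \<omega>"
  unfolding AE_all_countable cond_pmf_def
  by (intro allI sigma_finite_subalgebra.real_cond_exp_pos[OF sigma_finite_subalgebra_sigma_Y]) auto

lemma measurable_comp_Y_sigma_Y: "g \<in> measurable N K \<Longrightarrow> (\<lambda>\<omega>. g (Y \<omega>)) \<in> measurable sigma_Y K"
  using measurable_vimage_algebra1[OF Y_funcset] by (rule measurable_compose)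

lemma measurable_comp_X_Y:
  "(\<And>x. f x \<in> measurable N K) \<Longrightarrow> (\<lambda>\<omega>. f (X \<omega>) (Y \<omega>)) \<in> measurable M K"
  by (rule measurable_compose_countable[where f="\<lambda>x \<omega>. f x (Y \<omega>)" and g=X]) auto

lemma nn_integral_indicator_X_eq_post:
  assumes b: "b \<in> borel_measurable sigma_Y" and b0: "\<And>\<omega>. 0 \<le> b \<omega>" and b1: "\<And>\<omega>. b \<omega> \<le> 1"
  shows "(\<integral>\<^sup>+\<omega>. ennreal (indicator {\<omega>\<in>space M. X \<omega> = x} \<omega> * b \<omega>) \<partial>M)
    = (\<integral>\<^sup>+\<omega>. ennreal (post x \<omega> * b \<omega>) \<partial>M)"
proof -
  let ?I = "{\<omega>\<in>space M. X \<omega> = x}"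
  have I: "?I \<in> sets M" by measurable
  have [measurable]: "b \<in> borel_measurable M" using measurable_from_subalg[OF subalgebra_sigma_Y b] .
  have int: "integrable M (\<lambda>\<omega>. b \<omega> * indicator ?I \<omega>)"
    by (intro integrable_const_bound[where B=1]) (auto simp: b0 b1 abs_le_iff indicator_def)
  have post_eq: "post x = real_cond_exp M sigma_Y (indicator ?I)"
    unfolding cond_pmf_def ..
  note cond_exp = sigma_finite_subalgebra.real_cond_exp_intg[OF sigma_finite_subalgebra_sigma_Y
      int b borel_measurable_indicator[OF I], folded post_eq]
  have "AE \<omega> in M. 0 \<le> b \<omega> * post x \<omega>"
    using post_nonneg by eventually_elim (simp add: b0)
  then have "(\<integral>\<^sup>+\<omega>. ennreal (b \<omega> * post x \<omega>) \<partial>M) = ennreal (\<integral>\<omega>. b \<omega> * post x \<omega> \<partial>M)"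
    using cond_exp(1) by (intro nn_integral_eq_integral)
  also have "\<dots> = ennreal (\<integral>\<omega>. b \<omega> * indicator ?I \<omega> \<partial>M)" using cond_exp(2) by simp
  also have "\<dots> = (\<integral>\<^sup>+\<omega>. ennreal (indicator ?I \<omega> * b \<omega>) \<partial>M)"
    by (subst nn_integral_eq_integral[symmetric])
      (auto intro!: int nn_integral_cong simp: mult.commute b0)
  finally show ?thesis by (simp add: mult.commute)
qed

lemma nn_integral_comp_X_eq_post:
  assumes am: "\<And>x. a x \<in> borel_measurable sigma_Y"
    and a0: "\<And>x \<omega>. 0 \<le> a x \<omega>" and a1: "\<And>x \<omega>. a x \<omega> \<le> 1"
  shows "(\<integral>\<^sup>+\<omega>. ennreal (a (X \<omega>) \<omega>) \<partial>M) = (\<integral>\<^sup>+\<omega>. (\<Sum>x. ennreal (post x \<omega> * a x \<omega>)) \<partial>M)"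
proof -
  have [measurable]: "a x \<in> borel_measurable M" for x
    using measurable_from_subalg[OF subalgebra_sigma_Y am] .
  have "(\<integral>\<^sup>+\<omega>. ennreal (a (X \<omega>) \<omega>) \<partial>M)
      = (\<integral>\<^sup>+\<omega>. (\<Sum>x. ennreal (indicator {\<omega>\<in>space M. X \<omega> = x} \<omega> * a x \<omega>)) \<partial>M)"
  proof (intro nn_integral_cong)
    fix \<omega> assume "\<omega> \<in> space M"
    then show "ennreal (a (X \<omega>) \<omega>) = (\<Sum>x. ennreal (indicator {\<omega>\<in>space M. X \<omega> = x} \<omega> * a x \<omega>))"
      by (subst suminf_finite[of "{X \<omega>}"]) auto
  qed
  also have "\<dots> = (\<Sum>x. \<integral>\<^sup>+\<omega>. ennreal (indicator {\<omega>\<in>space M. X \<omega> = x} \<omega> * a x \<omega>) \<partial>M)"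
    by (intro nn_integral_suminf) measurable
  also have "\<dots> = (\<Sum>x. \<integral>\<^sup>+\<omega>. ennreal (post x \<omega> * a x \<omega>) \<partial>M)"
    using am a0 a1 by (intro suminf_cong nn_integral_indicator_X_eq_post)
  also have "\<dots> = (\<integral>\<^sup>+\<omega>. (\<Sum>x. ennreal (post x \<omega> * a x \<omega>)) \<partial>M)"
    by (intro nn_integral_suminf[symmetric]) measurable
  finally show ?thesis .
qed

definition rank :: "'a \<Rightarrow> nat" where
  "rank \<omega> = inv_into {1..} (\<sigma> \<omega>) (X \<omega>)"

lemma rank_ge_1: "\<omega> \<in> space M \<Longrightarrow> rank \<omega> \<ge> 1"
  and \<sigma>_rank: "\<omega> \<in> space M \<Longrightarrow> \<sigma> \<omega> (rank \<omega>) = X \<omega>"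
proof -
  assume "\<omega> \<in> space M"
  then have b: "bij_betw (\<sigma> \<omega>) {1..} {1..}" and x: "X \<omega> \<in> {1..}"
    using bij_\<sigma> X_ge_1 by auto
  then have "X \<omega> \<in> \<sigma> \<omega> ` {1..}" by (simp add: bij_betw_def)
  from inv_into_into[OF this] show "rank \<omega> \<ge> 1" unfolding rank_def by simp
  show "\<sigma> \<omega> (rank \<omega>) = X \<omega>" unfolding rank_def using bij_betw_inv_into_right[OF b x] .
qed

lemma rank_unique:
  assumes "\<omega> \<in> space M" "i \<ge> 1" "\<sigma> \<omega> i = X \<omega>"
  shows "i = rank \<omega>"
proof -
  have "bij_betw (\<sigma> \<omega>) {1..} {1..}" using bij_\<sigma> assms(1) by auto
  then show ?thesis unfolding rank_def using bij_betw_inv_into_left[of "\<sigma> \<omega>" _ _ i] assms by simp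
qed

lemma rank_eq_Least: "\<omega> \<in> space M \<Longrightarrow> rank \<omega> = (LEAST i. 1 \<le> i \<and> \<sigma> \<omega> i = X \<omega>)"
  by (rule Least_equality[symmetric]) (use rank_ge_1 \<sigma>_rank rank_unique in auto)

lemma measurable_\<sigma>[measurable]: "(\<lambda>\<omega>. \<sigma> \<omega> i) \<in> measurable M (count_space UNIV)"
  using measurable_from_subalg[OF subalgebra_sigma_Y] measurable_\<sigma>_sigma_Y by blast

lemma sets_\<sigma>_eq_X[measurable]: "{\<omega>\<in>space M. \<sigma> \<omega> j = X \<omega>} \<in> sets M"
proof -
  have "{\<omega>\<in>space M. \<sigma> \<omega> j = X \<omega>}
      = (\<Union>x. ((\<lambda>\<omega>. \<sigma> \<omega> j) -` {x} \<inter> space M) \<inter> (X -` {x} \<inter> space M))" by auto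
  then show ?thesis by simp
qed

lemma indicator_\<sigma>_eq_X:
  assumes "\<omega> \<in> space M" "i \<ge> 1"
  shows "indicator {\<omega>\<in>space M. \<sigma> \<omega> i = X \<omega>} \<omega> = (if i = rank \<omega> then 1 else 0)"
proof (cases "i = rank \<omega>")
  case True
  then show ?thesis using \<sigma>_rank assms(1) by simp
next
  case False
  then have "\<sigma> \<omega> i \<noteq> X \<omega>" using rank_unique[OF assms] by blast
  then show ?thesis using False by simp
qed

lemma measurable_rank[measurable]: "rank \<in> measurable M (count_space UNIV)"
  unfolding measurable_count_space_eq2_countable
proof (intro conjI ballI)
  fix r :: nat
  show "rank -` {r} \<inter> space M \<in> sets M"
  proof (cases "r \<ge> 1")
    case True
    then have "rank -` {r} \<inter> space M = {\<omega>\<in>space M. \<sigma> \<omega> r = X \<omega>}"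
      using \<sigma>_rank rank_unique by blast
    then show ?thesis by simp
  next
    case False
    then have "rank -` {r} \<inter> space M = {}" using rank_ge_1 by fastforce
    then show ?thesis by simp
  qed
qed simp

lemma nn_integral_post_\<sigma>:
  "(\<integral>\<^sup>+\<omega>. ennreal (post (\<sigma> \<omega> i) \<omega>) \<partial>M) = emeasure M {\<omega>\<in>space M. \<sigma> \<omega> i = X \<omega>}"
proof -
  define a where "a x \<omega> = (if \<sigma> \<omega> i = x then 1 else 0::real)" for x \<omega>
  have "a x \<in> borel_measurable sigma_Y" for x
    unfolding a_def using measurable_\<sigma>_sigma_Y
    by (intro measurable_compose[of "\<lambda>\<omega>. \<sigma> \<omega> i" _ "count_space UNIV" "\<lambda>k. if k = x then 1 else 0"]) auto
  then have "(\<integral>\<^sup>+\<omega>. (\<Sum>x. ennreal (post x \<omega> * a x \<omega>)) \<partial>M) = (\<integral>\<^sup>+\<omega>. ennreal (a (X \<omega>) \<omega>) \<partial>M)"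
    by (rule nn_integral_comp_X_eq_post[symmetric]) (auto simp: a_def)
  moreover have "(\<integral>\<^sup>+\<omega>. (\<Sum>x. ennreal (post x \<omega> * a x \<omega>)) \<partial>M) = (\<integral>\<^sup>+\<omega>. ennreal (post (\<sigma> \<omega> i) \<omega>) \<partial>M)"
    by (intro nn_integral_cong, subst suminf_finite[of "{\<sigma> _ i}"]) (auto simp: a_def)
  moreover have "(\<integral>\<^sup>+\<omega>. ennreal (a (X \<omega>) \<omega>) \<partial>M) = emeasure M {\<omega>\<in>space M. \<sigma> \<omega> i = X \<omega>}"
    unfolding nn_integral_indicator[OF sets_\<sigma>_eq_X, symmetric]
    by (intro nn_integral_cong) (simp add: a_def indicator_def)
  ultimately show ?thesis by simp
qed

lemma nn_integral_sum_post_\<sigma>: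
  "(\<integral>\<^sup>+\<omega>. (\<Sum>j\<in>{1..n}. ennreal (post (\<sigma> \<omega> j) \<omega>)) \<partial>M) = emeasure M {\<omega>\<in>space M. rank \<omega> \<le> n}"
proof -
  have [measurable]: "(\<lambda>\<omega>. post (\<sigma> \<omega> j) \<omega>) \<in> borel_measurable M" for j
    by (rule measurable_compose_countable[where f="\<lambda>x \<omega>. post x \<omega>" and g="\<lambda>\<omega>. \<sigma> \<omega> j"]) simp_all
  have "(\<integral>\<^sup>+\<omega>. (\<Sum>j\<in>{1..n}. ennreal (post (\<sigma> \<omega> j) \<omega>)) \<partial>M)
      = (\<Sum>j\<in>{1..n}. \<integral>\<^sup>+\<omega>. indicator {\<omega>\<in>space M. \<sigma> \<omega> j = X \<omega>} \<omega> \<partial>M)"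
    by (simp add: nn_integral_sum nn_integral_post_\<sigma>)
  also have "\<dots> = (\<integral>\<^sup>+\<omega>. (\<Sum>j\<in>{1..n}. indicator {\<omega>\<in>space M. \<sigma> \<omega> j = X \<omega>} \<omega>) \<partial>M)"
    by (rule nn_integral_sum[symmetric]) simp
  also have "\<dots> = (\<integral>\<^sup>+\<omega>. indicator {\<omega>\<in>space M. rank \<omega> \<le> n} \<omega> \<partial>M)"
  proof (intro nn_integral_cong)
    fix \<omega> assume \<omega>: "\<omega> \<in> space M"
    then have "(\<Sum>j\<in>{1..n}. indicator {\<omega>\<in>space M. \<sigma> \<omega> j = X \<omega>} \<omega>)
        = (\<Sum>j\<in>{1..n}. if j = rank \<omega> then 1 else 0 :: ennreal)"
      by (intro sum.cong) (auto simp: indicator_\<sigma>_eq_X)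
    also have "\<dots> = indicator {\<omega>\<in>space M. rank \<omega> \<le> n} \<omega>"
      using rank_ge_1[OF \<omega>] \<omega> by (simp add: sum.delta' indicator_def)
    finally show "(\<Sum>j\<in>{1..n}. indicator {\<omega>\<in>space M. \<sigma> \<omega> j = X \<omega>} \<omega>)
        = (indicator {\<omega>\<in>space M. rank \<omega> \<le> n} \<omega> :: ennreal)" .
  qed
  also have "\<dots> = emeasure M {\<omega>\<in>space M. rank \<omega> \<le> n}" by simp
  finally show ?thesis .
qed

text \<open>A guess of X from Y that may place total weight n on its candidates (each with weight
  at most 1) succeeds at best with the probability that X is among the n most likely values.\<close>
lemma nn_integral_comp_X_le_prob_rank:
  assumes am: "\<And>x. a x \<in> borel_measurable sigma_Y"
    and a0: "\<And>x \<omega>. 0 \<le> a x \<omega>" and a1: "\<And>x \<omega>. a x \<omega> \<le> 1" and a_0: "\<And>\<omega>. a 0 \<omega> = 0"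
    and a_sum: "\<And>\<omega> S. finite S \<Longrightarrow> (\<Sum>x\<in>S. a x \<omega>) \<le> real n" and n1: "n \<ge> 1"
  shows "(\<integral>\<^sup>+\<omega>. ennreal (a (X \<omega>) \<omega>) \<partial>M) \<le> emeasure M {\<omega>\<in>space M. rank \<omega> \<le> n}"
proof -
  have "(\<integral>\<^sup>+\<omega>. ennreal (a (X \<omega>) \<omega>) \<partial>M) = (\<integral>\<^sup>+\<omega>. (\<Sum>x. ennreal (post x \<omega> * a x \<omega>)) \<partial>M)"
    by (rule nn_integral_comp_X_eq_post[OF am a0 a1])
  also have "\<dots> \<le> (\<integral>\<^sup>+\<omega>. (\<Sum>j\<in>{1..n}. ennreal (post (\<sigma> \<omega> j) \<omega>)) \<partial>M)"
  proof (intro nn_integral_mono_AE)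
    show "AE \<omega> in M. (\<Sum>x. ennreal (post x \<omega> * a x \<omega>)) \<le> (\<Sum>j\<in>{1..n}. ennreal (post (\<sigma> \<omega> j) \<omega>))"
      using \<sigma>_decreasing post_nonneg AE_space
    proof eventually_elim
      case (elim \<omega>)
      have "(\<Sum>x. ennreal (post x \<omega> * a x \<omega>)) \<le> ennreal (\<Sum>j\<in>{1..n}. post (\<sigma> \<omega> j) \<omega>)"
        using elim bij_\<sigma> a0 a1 a_0 a_sum n1
        by (intro suminf_weighted_le_sum_first_bij[where s="\<sigma> \<omega>"]) auto
      also have "\<dots> = (\<Sum>j\<in>{1..n}. ennreal (post (\<sigma> \<omega> j) \<omega>))"
        using elim(2) by (intro sum_ennreal[symmetric]) blast
      finally show ?case .
    qed
  qed
  also have "\<dots> = emeasure M {\<omega>\<in>space M. rank \<omega> \<le> n}" by (rule nn_integral_sum_post_\<sigma>)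
  finally show ?thesis .
qed

text \<open>Doob--Dynkin: the \<sigma>(Y)-measurable permutation is a measurable function of Y.\<close>
lemma \<sigma>_factors_through_Y:
  obtains f :: "nat \<Rightarrow> 'b \<Rightarrow> nat" where "\<And>i. f i \<in> measurable N (count_space UNIV)"
    "\<And>i \<omega>. \<omega> \<in> space M \<Longrightarrow> f i (Y \<omega>) = \<sigma> \<omega> i"
proof -
  have "\<exists>A. A \<in> sets N \<and> {\<omega>\<in>space M. \<sigma> \<omega> i = k} = Y -` A \<inter> space M" for i k
  proof -
    have "(\<lambda>\<omega>. \<sigma> \<omega> i) -` {k} \<inter> space sigma_Y \<in> sets sigma_Y"
      using measurable_\<sigma>_sigma_Y by (intro measurable_sets) auto
    then have "{\<omega>\<in>space M. \<sigma> \<omega> i = k} \<in> sets sigma_Y" by (simp add: vimage_def Int_def conj_commute)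
    then show ?thesis unfolding sets_vimage_algebra2[OF Y_funcset] by blast
  qed
  then obtain A where A: "\<And>i k. A i k \<in> sets N"
    "\<And>i k. {\<omega>\<in>space M. \<sigma> \<omega> i = k} = Y -` A i k \<inter> space M"
    by metis
  show ?thesis
  proof
    fix i
    show "(\<lambda>y. LEAST k. y \<in> A i k) \<in> measurable N (count_space UNIV)"
      by (rule measurable_Least) (use A(1) in measurable)
  next
    fix i \<omega> assume "\<omega> \<in> space M"
    then have "Y \<omega> \<in> A i k \<longleftrightarrow> \<sigma> \<omega> i = k" for k using A(2)[of i k] by blast
    then show "(LEAST k. Y \<omega> \<in> A i k) = \<sigma> \<omega> i" by (simp add: Least_equality)
  qed
qed

lemma exists_rank_encoder_decoder:
  fixes C :: "nat \<Rightarrow> bool list pmf"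
  obtains F :: "nat \<Rightarrow> 'b \<Rightarrow> bool list pmf" and G :: "bool list \<Rightarrow> 'b \<Rightarrow> nat pmf"
  where "\<And>x w. (\<lambda>y. pmf (F x y) w) \<in> borel_measurable N"
    "\<And>w x. (\<lambda>y. pmf (G w y) x) \<in> borel_measurable N"
    "\<And>w y. set_pmf (G w y) \<subseteq> {1..}"
    "\<And>\<omega>. \<omega> \<in> space M \<Longrightarrow> F (X \<omega>) (Y \<omega>) = C (rank \<omega>)"
    "\<And>\<omega>. \<omega> \<in> space M \<Longrightarrow> G (bin_enc (rank \<omega>)) (Y \<omega>) = return_pmf (X \<omega>)"
proof -
  obtain f where f_meas: "\<And>i. f i \<in> measurable N (count_space UNIV)"
    and f_Y: "\<And>i \<omega>. \<omega> \<in> space M \<Longrightarrow> f i (Y \<omega>) = \<sigma> \<omega> i"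
    using \<sigma>_factors_through_Y by blast
  define rk where "rk x y = (LEAST i. 1 \<le> i \<and> f i y = x)" for x y
  have rk_meas: "rk x \<in> measurable N (count_space UNIV)" for x
    unfolding rk_def by (rule measurable_Least) (use f_meas in measurable)
  show ?thesis
  proof
    show "(\<lambda>y. pmf (C (rk x y)) w) \<in> borel_measurable N" for x w
      by (rule measurable_compose[OF rk_meas]) simp
    show "(\<lambda>y. pmf (return_pmf (max 1 (f (bin_dec w) y))) x) \<in> borel_measurable N" for w x
      by (rule measurable_compose[OF f_meas]) simp
    show "set_pmf (return_pmf (max 1 (f (bin_dec w) y))) \<subseteq> {1..}" for w y by simp
    show "C (rk (X \<omega>) (Y \<omega>)) = C (rank \<omega>)" if "\<omega> \<in> space M" for \<omega>
      unfolding rk_def rank_eq_Least[OF that] using f_Y[OF that] by simp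
    show "return_pmf (max 1 (f (bin_dec (bin_enc (rank \<omega>))) (Y \<omega>))) = return_pmf (X \<omega>)"
      if "\<omega> \<in> space M" for \<omega>
      using that bin_dec_bin_enc[OF rank_ge_1] f_Y \<sigma>_rank X_ge_1 by (simp add: max_def)
  qed
qed

end

section \<open>The expected cutoff length\<close>

context ranked_source
begin

definition opt_len :: "'a \<Rightarrow> nat" where
  "opt_len \<omega> = length (bin_enc (rank \<omega>))"

definition log_rank :: "'a \<Rightarrow> real" where
  "log_rank \<omega> = real_of_int \<lfloor>log 2 (real (rank \<omega>))\<rfloor>"

lemma log_rank_eq_opt_len: "\<omega> \<in> space M \<Longrightarrow> log_rank \<omega> = real (opt_len \<omega>)"
  unfolding log_rank_def opt_len_def using floor_log_eq_length_bin_enc[OF rank_ge_1] by simp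

lemma measurable_opt_len[measurable]: "opt_len \<in> measurable M (count_space UNIV)"
  unfolding opt_len_def by (rule measurable_compose[OF measurable_rank]) simp

lemma sets_opt_len[measurable]: "{\<omega>\<in>space M. P (opt_len \<omega>)} \<in> sets M"
  using measurable_sets[OF measurable_opt_len, of "{n. P n}"] by (simp add: vimage_def Int_def conj_commute)

lemma opt_len_le_iff: "\<omega> \<in> space M \<Longrightarrow> opt_len \<omega> \<le> k \<longleftrightarrow> rank \<omega> < 2 ^ (k + 1)"
  unfolding opt_len_def by (rule length_bin_enc_le_iff[OF rank_ge_1])

end

locale cutoff_source = ranked_source +
  fixes eps :: real and \<eta> :: ereal and \<beta> :: real
  assumes cutoff_params: "cutoff_params M log_rank eps \<eta> \<beta>"
begin

abbreviation "coin \<equiv> measure_pmf (bernoulli_pmf (1 - \<beta>))"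

definition keep_prob :: "nat \<Rightarrow> real" where
  "keep_prob n = (if ereal (real n) < \<eta> then 1 else if ereal (real n) = \<eta> then 1 - \<beta> else 0)"

definition cut_above :: "'a set" where
  "cut_above = {\<omega>\<in>space M. \<eta> < ereal (real (opt_len \<omega>))}"

definition cut_at :: "'a set" where
  "cut_at = {\<omega>\<in>space M. ereal (real (opt_len \<omega>)) = \<eta>}"

definition drop_prob :: "'a \<Rightarrow> real" where
  "drop_prob \<omega> = indicator cut_above \<omega> + \<beta> * indicator cut_at \<omega>"

definition tail_bound :: ennreal where
  "tail_bound = (\<Sum>k. ennreal (prob {\<omega>\<in>space M. k < opt_len \<omega>} - eps))"

lemma beta_nonneg: "0 \<le> \<beta>" and beta_less_1: "\<beta> < 1"
  using cutoff_params unfolding cutoff_params_def by auto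

lemma sets_cut_above[measurable]: "cut_above \<in> sets M" and sets_cut_at[measurable]: "cut_at \<in> sets M"
  unfolding cut_above_def cut_at_def by (rule sets_opt_len)+

lemma prob_cut_eq_eps: "prob cut_above + \<beta> * prob cut_at = eps"
proof -
  have "{\<omega>\<in>space M. ereal (log_rank \<omega>) > \<eta>} = cut_above" "{\<omega>\<in>space M. ereal (log_rank \<omega>) = \<eta>} = cut_at"
    unfolding cut_above_def cut_at_def using log_rank_eq_opt_len by auto
  with cutoff_params show ?thesis unfolding cutoff_params_def by simp
qed

lemma eps_nonneg: "0 \<le> eps"
  using prob_cut_eq_eps beta_nonneg by (metis add_nonneg_nonneg measure_nonneg mult_nonneg_nonneg)

lemma keep_prob_nonneg: "0 \<le> keep_prob n"
  unfolding keep_prob_def using beta_less_1 by auto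

lemma keep_prob_opt_len: "\<omega> \<in> space M \<Longrightarrow> keep_prob (opt_len \<omega>) = 1 - drop_prob \<omega>"
  unfolding keep_prob_def drop_prob_def cut_above_def cut_at_def by (auto simp: indicator_def not_less)

lemma integrable_drop_prob: "integrable M drop_prob"
  and integral_drop_prob: "(\<integral>\<omega>. drop_prob \<omega> \<partial>M) = eps"
proof -
  have int: "integrable M (indicator cut_above :: 'a \<Rightarrow> real)"
    "integrable M (\<lambda>\<omega>. \<beta> * indicator cut_at \<omega> :: real)"
    by (auto intro!: integrable_real_indicator simp: less_top[symmetric])
  then show "integrable M drop_prob" unfolding drop_prob_def by simp
  have "(\<integral>\<omega>. drop_prob \<omega> \<partial>M) = prob cut_above + \<beta> * prob cut_at"
    unfolding drop_prob_def using int by simp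
  then show "(\<integral>\<omega>. drop_prob \<omega> \<partial>M) = eps" using prob_cut_eq_eps by simp
qed

lemma tail_keep_prob_below_threshold:
  assumes "ereal (real k) < \<eta>" "\<omega> \<in> space M"
  shows "indicator {\<omega>\<in>space M. k < opt_len \<omega>} \<omega> * keep_prob (opt_len \<omega>)
    = indicator {\<omega>\<in>space M. k < opt_len \<omega>} \<omega> - drop_prob \<omega>"
proof (cases "k < opt_len \<omega>")
  case False
  then have "ereal (real (opt_len \<omega>)) \<le> ereal (real k)" by simp
  then have "ereal (real (opt_len \<omega>)) < \<eta>" using assms(1) by (rule le_less_trans)
  then have "\<omega> \<notin> cut_above" "\<omega> \<notin> cut_at" unfolding cut_above_def cut_at_def by auto
  then show ?thesis using False by (simp add: drop_prob_def)
qed (simp add: keep_prob_opt_len assms(2))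

lemma opt_len_gt_above_threshold:
  "\<eta> \<le> ereal (real k) \<Longrightarrow> k < opt_len \<omega> \<Longrightarrow> \<eta> < ereal (real (opt_len \<omega>))"
  by (erule le_less_trans) simp

lemma prob_opt_len_gt_le_eps:
  assumes "\<eta> \<le> ereal (real k)"
  shows "prob {\<omega>\<in>space M. k < opt_len \<omega>} \<le> eps"
proof -
  have "{\<omega>\<in>space M. k < opt_len \<omega>} \<subseteq> cut_above"
    unfolding cut_above_def using opt_len_gt_above_threshold[OF assms] by blast
  then have "prob {\<omega>\<in>space M. k < opt_len \<omega>} \<le> prob cut_above"
    by (intro finite_measure_mono sets_cut_above)
  also have "\<dots> \<le> eps"
    using prob_cut_eq_eps mult_nonneg_nonneg[OF beta_nonneg measure_nonneg, of M cut_at]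
    by linarith
  finally show ?thesis .
qed

text \<open>Below the threshold \<eta> the weights keep_prob lose exactly the mass eps;
  beyond it they vanish, and so does (P{opt_len > k} - eps)^+.\<close>
lemma nn_integral_tail_keep_prob:
  "(\<integral>\<^sup>+\<omega>. ennreal (indicator {\<omega>\<in>space M. k < opt_len \<omega>} \<omega> * keep_prob (opt_len \<omega>)) \<partial>M)
    = ennreal (prob {\<omega>\<in>space M. k < opt_len \<omega>} - eps)"
proof (cases "ereal (real k) < \<eta>")
  case True
  let ?T = "{\<omega>\<in>space M. k < opt_len \<omega>}"
  note pointwise = tail_keep_prob_below_threshold[OF True]
  have int_T: "integrable M (indicator ?T :: 'a \<Rightarrow> real)"
    by (intro integrable_real_indicator) (auto simp: less_top[symmetric])
  have "(\<integral>\<^sup>+\<omega>. ennreal (indicator ?T \<omega> * keep_prob (opt_len \<omega>)) \<partial>M)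
      = (\<integral>\<^sup>+\<omega>. ennreal (indicator ?T \<omega> - drop_prob \<omega>) \<partial>M)"
    by (intro nn_integral_cong) (simp only: pointwise)
  also have "\<dots> = ennreal (\<integral>\<omega>. indicator ?T \<omega> - drop_prob \<omega> \<partial>M)"
  proof (rule nn_integral_eq_integral)
    show "integrable M (\<lambda>\<omega>. indicator ?T \<omega> - drop_prob \<omega>)"
      using int_T integrable_drop_prob by (rule Bochner_Integration.integrable_diff)
    show "AE \<omega> in M. 0 \<le> indicator ?T \<omega> - drop_prob \<omega>"
      by (intro AE_I2) (simp add: pointwise[symmetric] keep_prob_nonneg)
  qed
  also have "(\<integral>\<omega>. indicator ?T \<omega> - drop_prob \<omega> \<partial>M) = prob ?T - eps"
    using int_T integrable_drop_prob by (simp add: integral_drop_prob)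
  finally show ?thesis .
next
  case False
  then have "\<eta> \<le> ereal (real k)" by simp
  then have "ennreal (prob {\<omega>\<in>space M. k < opt_len \<omega>} - eps) = 0"
    using prob_opt_len_gt_le_eps by (simp add: ennreal_neg)
  moreover have "(\<lambda>\<omega>. ennreal (indicator {\<omega>\<in>space M. k < opt_len \<omega>} \<omega> * keep_prob (opt_len \<omega>))) = (\<lambda>_. 0)"
  proof
    fix \<omega>
    show "ennreal (indicator {\<omega>\<in>space M. k < opt_len \<omega>} \<omega> * keep_prob (opt_len \<omega>)) = 0"
      using opt_len_gt_above_threshold[OF \<open>\<eta> \<le> ereal (real k)\<close>, of \<omega>]
      by (cases "k < opt_len \<omega>") (auto simp: keep_prob_def)
  qed
  ultimately show ?thesis by simp
qed

lemma nn_integral_opt_len_keep_prob: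
  "(\<integral>\<^sup>+\<omega>. ennreal (real (opt_len \<omega>) * keep_prob (opt_len \<omega>)) \<partial>M) = tail_bound"
proof -
  have "ennreal (real (opt_len \<omega>) * keep_prob (opt_len \<omega>))
      = (\<Sum>k. ennreal (indicator {\<omega>\<in>space M. k < opt_len \<omega>} \<omega> * keep_prob (opt_len \<omega>)))"
    if \<omega>: "\<omega> \<in> space M" for \<omega>
  proof -
    have "(\<Sum>k. ennreal (indicator {\<omega>\<in>space M. k < opt_len \<omega>} \<omega> * keep_prob (opt_len \<omega>)))
        = (\<Sum>k<opt_len \<omega>. ennreal (keep_prob (opt_len \<omega>)))"
      using \<omega> by (subst suminf_finite[of "{..<opt_len \<omega>}"]) (auto simp: indicator_def)
    also have "\<dots> = ennreal (real (opt_len \<omega>) * keep_prob (opt_len \<omega>))"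
      using keep_prob_nonneg by (simp add: ennreal_mult' ennreal_of_nat_eq_real_of_nat mult.commute)
    finally show ?thesis ..
  qed
  then have "(\<integral>\<^sup>+\<omega>. ennreal (real (opt_len \<omega>) * keep_prob (opt_len \<omega>)) \<partial>M)
      = (\<integral>\<^sup>+\<omega>. (\<Sum>k. ennreal (indicator {\<omega>\<in>space M. k < opt_len \<omega>} \<omega> * keep_prob (opt_len \<omega>))) \<partial>M)"
    by (rule nn_integral_cong)
  also have "\<dots> = (\<Sum>k. \<integral>\<^sup>+\<omega>. ennreal (indicator {\<omega>\<in>space M. k < opt_len \<omega>} \<omega> * keep_prob (opt_len \<omega>)) \<partial>M)"
    by (rule nn_integral_suminf) measurable
  also have "\<dots> = tail_bound"
    unfolding tail_bound_def by (intro suminf_cong nn_integral_tail_keep_prob)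
  finally show ?thesis .
qed

lemma nn_integral_cutoff_coin:
  "(\<integral>\<^sup>+b. ennreal (cutoff \<eta> (real n) b) \<partial>coin) = ennreal (real n * keep_prob n)"
proof -
  have p: "0 \<le> 1 - \<beta>" "1 - \<beta> \<le> 1" using beta_nonneg beta_less_1 by auto
  have "(\<integral>\<^sup>+b. ennreal (cutoff \<eta> (real n) b) \<partial>coin)
      = ennreal (cutoff \<eta> (real n) True) * ennreal (1 - \<beta>) + ennreal (cutoff \<eta> (real n) False) * ennreal \<beta>"
    using nn_integral_bernoulli_pmf[OF p] by simp
  also have "\<dots> = ennreal (cutoff \<eta> (real n) True * (1 - \<beta>) + cutoff \<eta> (real n) False * \<beta>)"
    using p beta_nonneg by (simp add: cutoff_def ennreal_mult'' ennreal_plus)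
  also have "\<dots> = ennreal (real n * keep_prob n)"
    by (simp add: cutoff_def keep_prob_def algebra_simps)
  finally show ?thesis .
qed

lemma cutoff_exp_eq_tail_bound: "cutoff_exp M log_rank \<eta> \<beta> = tail_bound"
proof -
  have meas: "(\<lambda>p. ennreal (cutoff \<eta> (log_rank (fst p)) (snd p))) \<in> borel_measurable (M \<Otimes>\<^sub>M coin)"
    unfolding log_rank_def
  proof (rule measurable_compose_countable[where g="\<lambda>p. rank (fst p)"])
    show "(\<lambda>p. rank (fst p)) \<in> measurable (M \<Otimes>\<^sub>M coin) (count_space UNIV)"
      by (rule measurable_compose[OF measurable_fst measurable_rank])
  qed (rule measurable_compose[OF measurable_snd], simp)
  have "cutoff_exp M log_rank \<eta> \<beta> = (\<integral>\<^sup>+\<omega>. \<integral>\<^sup>+b. ennreal (cutoff \<eta> (log_rank \<omega>) b) \<partial>coin \<partial>M)"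
    unfolding cutoff_exp_def
    using sigma_finite_measure.nn_integral_fst[OF prob_space_imp_sigma_finite[OF prob_space_measure_pmf]
        meas]
    by simp
  also have "\<dots> = (\<integral>\<^sup>+\<omega>. ennreal (real (opt_len \<omega>) * keep_prob (opt_len \<omega>)) \<partial>M)"
    by (intro nn_integral_cong) (simp add: log_rank_eq_opt_len nn_integral_cutoff_coin)
  finally show ?thesis using nn_integral_opt_len_keep_prob by simp
qed

end

section \<open>Success probability of a stochastic code\<close>

lemma finite_bool_lists_length_le: "finite {w::bool list. length w \<le> k}"
  using finite_lists_length_le[of "UNIV::bool set" k] by simp

lemma card_bool_lists_length_le: "card {w::bool list. length w \<le> k} = 2 ^ (k + 1) - 1"
proof -
  have "(\<Sum>i\<le>k. (2::nat) ^ i) + 1 = 2 ^ (k + 1)" by (induction k) auto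
  moreover have "card {w::bool list. length w \<le> k} = (\<Sum>i\<le>k. 2 ^ i)"
    using card_lists_length_le[of "UNIV::bool set" k] by simp
  ultimately show ?thesis by simp
qed

lemma sum_pmf_le_1: "finite S \<Longrightarrow> (\<Sum>x\<in>S. pmf p x) \<le> 1"
  using measure_measure_pmf_finite[of S p] measure_pmf.prob_le_1[of p S] by simp

lemma borel_measurable_nn_integral_count_space:
  fixes h :: "'b \<Rightarrow> 'c::countable \<Rightarrow> ennreal"
  assumes "\<And>w. (\<lambda>y. h y w) \<in> borel_measurable N"
  shows "(\<lambda>y. \<integral>\<^sup>+w. h y w \<partial>count_space UNIV) \<in> borel_measurable N"
proof -
  have "(\<lambda>p. h (fst p) (snd p)) \<in> borel_measurable (N \<Otimes>\<^sub>M count_space UNIV)"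
    by (rule measurable_compose_countable[where g=snd])
      (auto intro: measurable_compose[OF measurable_fst assms])
  then show ?thesis
    by (intro sigma_finite_measure.borel_measurable_nn_integral
        sigma_finite_measure_count_space_countable) (simp_all add: case_prod_beta')
qed

definition short_success :: "nat \<Rightarrow> bool list pmf \<Rightarrow> (bool list \<Rightarrow> 'x pmf) \<Rightarrow> 'x \<Rightarrow> real" where
  "short_success k p G x = (\<Sum>w\<in>{w. length w \<le> k}. pmf p w * pmf (G w) x)"

definition long_success :: "nat \<Rightarrow> bool list pmf \<Rightarrow> (bool list \<Rightarrow> 'x pmf) \<Rightarrow> 'x \<Rightarrow> ennreal" where
  "long_success k p G x =
     (\<integral>\<^sup>+w. indicator {w. k < length w} w * ennreal (pmf p w * pmf (G w) x) \<partial>count_space UNIV)"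

lemma short_success_nonneg: "0 \<le> short_success k p G x"
  unfolding short_success_def by (intro sum_nonneg) simp

lemma short_success_le_1: "short_success k p G x \<le> 1"
proof -
  have "short_success k p G x \<le> (\<Sum>w\<in>{w. length w \<le> k}. pmf p w)"
    unfolding short_success_def by (intro sum_mono) (simp add: mult_left_le pmf_le_1)
  also have "\<dots> \<le> 1" by (rule sum_pmf_le_1[OF finite_bool_lists_length_le])
  finally show ?thesis .
qed

text \<open>Each short codeword is decoded into at most one value in total, whatever the codeword
  distributions P x are.\<close>
lemma sum_short_success_le:
  assumes "finite S"
  shows "(\<Sum>x\<in>S. short_success k (P x) G x) \<le> real (2 ^ (k + 1) - 1)"
proof -
  have "(\<Sum>x\<in>S. short_success k (P x) G x) \<le> (\<Sum>x\<in>S. \<Sum>w\<in>{w. length w \<le> k}. pmf (G w) x)"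
    unfolding short_success_def
    by (intro sum_mono) (simp add: mult_left_le_one_le pmf_le_1)
  also have "\<dots> = (\<Sum>w\<in>{w. length w \<le> k}. \<Sum>x\<in>S. pmf (G w) x)" by (rule sum.swap)
  also have "\<dots> \<le> (\<Sum>w\<in>{w::bool list. length w \<le> k}. 1)" by (intro sum_mono sum_pmf_le_1 assms)
  finally show ?thesis by (simp add: card_bool_lists_length_le)
qed

lemma pmf_bind_eq_short_success_plus_long_success:
  "ennreal (pmf (bind_pmf p G) x) = ennreal (short_success k p G x) + long_success k p G x"
proof -
  let ?W = "{w::bool list. length w \<le> k}"
  have "ennreal (pmf (bind_pmf p G) x) = (\<integral>\<^sup>+w. ennreal (pmf p w * pmf (G w) x) \<partial>count_space UNIV)"
    by (simp add: ennreal_pmf_bind nn_integral_measure_pmf ennreal_mult)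
  also have "\<dots> = (\<integral>\<^sup>+w. indicator ?W w * ennreal (pmf p w * pmf (G w) x)
      + indicator {w. k < length w} w * ennreal (pmf p w * pmf (G w) x) \<partial>count_space UNIV)"
    by (intro nn_integral_cong) (simp add: indicator_def)
  also have "\<dots> = (\<integral>\<^sup>+w. ennreal (pmf p w * pmf (G w) x) \<partial>count_space ?W) + long_success k p G x"
    unfolding long_success_def
    by (subst nn_integral_add) (simp_all add: nn_integral_count_space_indicator mult.commute)
  also have "(\<integral>\<^sup>+w. ennreal (pmf p w * pmf (G w) x) \<partial>count_space ?W) = ennreal (short_success k p G x)"
    unfolding short_success_def
    by (simp add: nn_integral_count_space_finite[OF finite_bool_lists_length_le])
  finally show ?thesis .
qed

text \<open>A codeword of length l is counted in long_success k for the l values k < l.\<close>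
lemma suminf_long_success_le: "(\<Sum>k. long_success k p G x) \<le> (\<integral>\<^sup>+w. real (length w) \<partial>p)"
proof -
  have "(\<Sum>k. long_success k p G x)
      = (\<integral>\<^sup>+w. (\<Sum>k. indicator {w. k < length w} w) * ennreal (pmf p w * pmf (G w) x) \<partial>count_space UNIV)"
    unfolding long_success_def by (simp add: nn_integral_suminf[symmetric])
  also have "\<dots> \<le> (\<integral>\<^sup>+w. ennreal (pmf p w) * ennreal (real (length w)) \<partial>count_space UNIV)"
  proof (intro nn_integral_mono)
    fix w :: "bool list"
    have "(\<Sum>k. indicator {w. k < length w} w :: ennreal) = (\<Sum>k<length w. 1)"
      by (subst suminf_finite[of "{..<length w}"]) (auto simp: indicator_def)
    moreover have "ennreal (pmf p w * pmf (G w) x) \<le> ennreal (pmf p w)"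
      by (intro ennreal_leI) (simp add: mult_left_le pmf_le_1)
    ultimately show "(\<Sum>k. indicator {w. k < length w} w) * ennreal (pmf p w * pmf (G w) x)
        \<le> ennreal (pmf p w) * ennreal (real (length w))"
      by (simp add: ennreal_of_nat_eq_real_of_nat mult.commute mult_left_mono)
  qed
  also have "\<dots> = (\<integral>\<^sup>+w. real (length w) \<partial>p)" by (rule nn_integral_measure_pmf[symmetric])
  finally show ?thesis .
qed

lemma borel_measurable_short_success:
  assumes "\<And>w. (\<lambda>y. pmf (P y) w) \<in> borel_measurable N" "\<And>w. (\<lambda>y. pmf (G w y) x) \<in> borel_measurable N"
  shows "(\<lambda>y. short_success k (P y) (\<lambda>w. G w y) x) \<in> borel_measurable N"
  unfolding short_success_def using assms by measurable

lemma borel_measurable_long_success: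
  assumes "\<And>w. (\<lambda>y. pmf (P y) w) \<in> borel_measurable N" "\<And>w. (\<lambda>y. pmf (G w y) x) \<in> borel_measurable N"
  shows "(\<lambda>y. long_success k (P y) (\<lambda>w. G w y) x) \<in> borel_measurable N"
  unfolding long_success_def using assms
  by (intro borel_measurable_nn_integral_count_space) measurable

lemma borel_measurable_pmf_bind:
  fixes P :: "'b \<Rightarrow> bool list pmf"
  assumes "\<And>w. (\<lambda>y. pmf (P y) w) \<in> borel_measurable N" "\<And>w. (\<lambda>y. pmf (G w y) x) \<in> borel_measurable N"
  shows "(\<lambda>y. pmf (bind_pmf (P y) (\<lambda>w. G w y)) x) \<in> borel_measurable N"
proof -
  have "(\<lambda>y. ennreal (pmf (bind_pmf (P y) (\<lambda>w. G w y)) x)) \<in> borel_measurable N"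
    unfolding pmf_bind_eq_short_success_plus_long_success[of _ _ _ 0]
    using borel_measurable_short_success[OF assms] borel_measurable_long_success[OF assms]
    by measurable
  then show ?thesis by simp
qed

section \<open>The converse: no code beats the expected cutoff length\<close>

context cutoff_source
begin

lemma nn_integral_short_success_le:
  assumes F: "\<And>x w. (\<lambda>y. pmf (F x y) w) \<in> borel_measurable N"
    and G: "\<And>w x. (\<lambda>y. pmf (G w y) x) \<in> borel_measurable N"
  shows "(\<integral>\<^sup>+\<omega>. short_success k (F (X \<omega>) (Y \<omega>)) (\<lambda>w. G w (Y \<omega>)) (X \<omega>) \<partial>M)
    \<le> prob {\<omega>\<in>space M. opt_len \<omega> \<le> k}"
proof -
  define a where "a x \<omega> = (if x = 0 then 0 else short_success k (F x (Y \<omega>)) (\<lambda>w. G w (Y \<omega>)) x)"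
    for x \<omega>
  have "(\<integral>\<^sup>+\<omega>. short_success k (F (X \<omega>) (Y \<omega>)) (\<lambda>w. G w (Y \<omega>)) (X \<omega>) \<partial>M)
      = (\<integral>\<^sup>+\<omega>. a (X \<omega>) \<omega> \<partial>M)"
    using X_ge_1 by (intro nn_integral_cong) (auto simp: a_def)
  also have "\<dots> \<le> emeasure M {\<omega>\<in>space M. rank \<omega> \<le> 2 ^ (k + 1) - 1}"
  proof (rule nn_integral_comp_X_le_prob_rank)
    show "a x \<in> borel_measurable sigma_Y" for x
      unfolding a_def using measurable_comp_Y_sigma_Y[OF borel_measurable_short_success[OF F G]]
      by simp
    show "(\<Sum>x\<in>S. a x \<omega>) \<le> real (2 ^ (k + 1) - 1)" if "finite S" for \<omega> S
    proof -
      have "(\<Sum>x\<in>S. a x \<omega>) \<le> (\<Sum>x\<in>S. short_success k (F x (Y \<omega>)) (\<lambda>w. G w (Y \<omega>)) x)"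
        unfolding a_def by (intro sum_mono) (simp add: short_success_nonneg)
      also have "\<dots> \<le> real (2 ^ (k + 1) - 1)" by (rule sum_short_success_le[OF that])
      finally show ?thesis .
    qed
    have "(2::nat) \<le> 2 ^ (k + 1)" by simp
    then show "1 \<le> (2::nat) ^ (k + 1) - 1" by linarith
  qed (auto simp: a_def short_success_nonneg short_success_le_1)
  also have "{\<omega>\<in>space M. rank \<omega> \<le> 2 ^ (k + 1) - 1} = {\<omega>\<in>space M. opt_len \<omega> \<le> k}"
    using opt_len_le_iff by (auto simp: less_Suc_eq_le[symmetric])
  finally show ?thesis by (simp add: emeasure_eq_measure)
qed

lemma one_le_eps_plus_success:
  assumes code: "avg_code M X Y N L eps F G"
  shows "1 \<le> ennreal eps + (\<integral>\<^sup>+\<omega>. pmf (bind_pmf (F (X \<omega>) (Y \<omega>)) (\<lambda>w. G w (Y \<omega>))) (X \<omega>) \<partial>M)"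
proof -
  define succ where "succ \<omega> = pmf (bind_pmf (F (X \<omega>) (Y \<omega>)) (\<lambda>w. G w (Y \<omega>))) (X \<omega>)" for \<omega>
  from code have F: "\<And>x w. (\<lambda>y. pmf (F x y) w) \<in> borel_measurable N"
    and G: "\<And>w x. (\<lambda>y. pmf (G w y) x) \<in> borel_measurable N"
    and err: "(\<integral>\<^sup>+\<omega>. ennreal (measure_pmf.prob (bind_pmf (F (X \<omega>) (Y \<omega>)) (\<lambda>w. G w (Y \<omega>)))
        (UNIV - {X \<omega>})) \<partial>M) \<le> ennreal eps"
    unfolding avg_code_def by auto
  have [measurable]: "succ \<in> borel_measurable M"
    unfolding succ_def[abs_def] by (rule measurable_comp_X_Y, rule borel_measurable_pmf_bind[OF F G])
  have "measure_pmf.prob (bind_pmf (F (X \<omega>) (Y \<omega>)) (\<lambda>w. G w (Y \<omega>))) (UNIV - {X \<omega>})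
      = 1 - succ \<omega>" for \<omega>
    using measure_pmf.prob_compl[of "{X \<omega>}"] unfolding succ_def by (simp add: measure_pmf_single)
  with err have err': "(\<integral>\<^sup>+\<omega>. ennreal (1 - succ \<omega>) \<partial>M) \<le> ennreal eps" by simp
  have "1 = (\<integral>\<^sup>+\<omega>. 1 \<partial>M)" by (simp add: emeasure_space_1)
  also have "\<dots> = (\<integral>\<^sup>+\<omega>. ennreal (1 - succ \<omega>) + ennreal (succ \<omega>) \<partial>M)"
    by (intro nn_integral_cong, subst ennreal_plus[symmetric]) (simp_all add: succ_def pmf_le_1)
  also have "\<dots> = (\<integral>\<^sup>+\<omega>. ennreal (1 - succ \<omega>) \<partial>M) + (\<integral>\<^sup>+\<omega>. succ \<omega> \<partial>M)"
    by (rule nn_integral_add) auto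
  also have "\<dots> \<le> ennreal eps + (\<integral>\<^sup>+\<omega>. succ \<omega> \<partial>M)"
    using err' by (rule add_right_mono)
  finally show ?thesis unfolding succ_def .
qed

text \<open>For the code to err with probability at most eps, the codewords of length at most k,
  which succeed with probability at most P{opt_len \<le> k}, must be supplemented by the long
  ones.\<close>
lemma prob_opt_len_gt_le_long_success:
  assumes code: "avg_code M X Y N L eps F G"
  shows "ennreal (prob {\<omega>\<in>space M. k < opt_len \<omega>} - eps)
    \<le> (\<integral>\<^sup>+\<omega>. long_success k (F (X \<omega>) (Y \<omega>)) (\<lambda>w. G w (Y \<omega>)) (X \<omega>) \<partial>M)"
proof -
  from code have F: "\<And>x w. (\<lambda>y. pmf (F x y) w) \<in> borel_measurable N"
    and G: "\<And>w x. (\<lambda>y. pmf (G w y) x) \<in> borel_measurable N"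
    unfolding avg_code_def by auto
  define short where "short \<omega> = short_success k (F (X \<omega>) (Y \<omega>)) (\<lambda>w. G w (Y \<omega>)) (X \<omega>)" for \<omega>
  define long where "long \<omega> = long_success k (F (X \<omega>) (Y \<omega>)) (\<lambda>w. G w (Y \<omega>)) (X \<omega>)" for \<omega>
  have [measurable]: "(\<lambda>\<omega>. ennreal (short \<omega>)) \<in> borel_measurable M" "long \<in> borel_measurable M"
    unfolding short_def long_def using borel_measurable_short_success[OF F G]
      borel_measurable_long_success[OF F G]
    by (auto intro!: measurable_comp_X_Y)
  have "1 \<le> ennreal eps + (\<integral>\<^sup>+\<omega>. ennreal (short \<omega>) + long \<omega> \<partial>M)"
    using one_le_eps_plus_success[OF code]
    by (simp add: short_def long_def pmf_bind_eq_short_success_plus_long_success[of _ _ _ k])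
  also have "\<dots> = ennreal eps + ((\<integral>\<^sup>+\<omega>. short \<omega> \<partial>M) + (\<integral>\<^sup>+\<omega>. long \<omega> \<partial>M))"
    by (simp add: nn_integral_add)
  also have "\<dots> \<le> ennreal eps + (ennreal (prob {\<omega>\<in>space M. opt_len \<omega> \<le> k}) + (\<integral>\<^sup>+\<omega>. long \<omega> \<partial>M))"
    using nn_integral_short_success_le[where F=F and G=G, OF F G, of k]
    by (intro add_mono order_refl) (simp add: short_def)
  finally have total: "1 \<le> ennreal (eps + prob {\<omega>\<in>space M. opt_len \<omega> \<le> k}) + (\<integral>\<^sup>+\<omega>. long \<omega> \<partial>M)"
    using eps_nonneg by (simp add: ennreal_plus add.assoc)
  have "{\<omega>\<in>space M. k < opt_len \<omega>} = space M - {\<omega>\<in>space M. opt_len \<omega> \<le> k}" by auto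
  then have compl: "prob {\<omega>\<in>space M. k < opt_len \<omega>} - eps = 1 - (eps + prob {\<omega>\<in>space M. opt_len \<omega> \<le> k})"
    using prob_compl[OF sets_opt_len[of "\<lambda>n. n \<le> k"]] by simp
  have "ennreal (prob {\<omega>\<in>space M. k < opt_len \<omega>} - eps)
      = 1 - ennreal (eps + prob {\<omega>\<in>space M. opt_len \<omega> \<le> k})"
    unfolding compl using ennreal_minus[of "eps + prob {\<omega>\<in>space M. opt_len \<omega> \<le> k}" 1] eps_nonneg
    by simp
  also have "\<dots> \<le> (\<integral>\<^sup>+\<omega>. long \<omega> \<partial>M)"
    using total by (simp add: ennreal_minus_le_iff)
  finally show ?thesis unfolding long_def .
qed

lemma tail_bound_le_avg_code_length:
  assumes code: "avg_code M X Y N L eps F G"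
  shows "tail_bound \<le> L"
proof -
  have "tail_bound \<le> (\<Sum>k. \<integral>\<^sup>+\<omega>. long_success k (F (X \<omega>) (Y \<omega>)) (\<lambda>w. G w (Y \<omega>)) (X \<omega>) \<partial>M)"
    unfolding tail_bound_def by (intro suminf_le summableI prob_opt_len_gt_le_long_success[OF code])
  also have "\<dots> = (\<integral>\<^sup>+\<omega>. (\<Sum>k. long_success k (F (X \<omega>) (Y \<omega>)) (\<lambda>w. G w (Y \<omega>)) (X \<omega>)) \<partial>M)"
    using code unfolding avg_code_def
    by (intro nn_integral_suminf[symmetric] measurable_comp_X_Y borel_measurable_long_success) auto
  also have "\<dots> \<le> (\<integral>\<^sup>+\<omega>. (\<integral>\<^sup>+w. real (length w) \<partial>F (X \<omega>) (Y \<omega>)) \<partial>M)"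
    by (intro nn_integral_mono suminf_long_success_le)
  also have "\<dots> \<le> L" using code unfolding avg_code_def by simp
  finally show ?thesis .
qed

end

section \<open>Achievability\<close>

context cutoff_source
begin

definition cut_code :: "nat \<Rightarrow> bool list pmf" where
  "cut_code r =
    (if ereal (real (length (bin_enc r))) < \<eta> then return_pmf (bin_enc r)
     else if ereal (real (length (bin_enc r))) = \<eta>
       then map_pmf (\<lambda>b. if b then bin_enc r else []) (bernoulli_pmf (1 - \<beta>))
     else return_pmf [])"

lemma nn_integral_length_cut_code:
  "(\<integral>\<^sup>+w. real (length w) \<partial>cut_code r)
    = ennreal (real (length (bin_enc r)) * keep_prob (length (bin_enc r)))"
proof -
  have p: "0 \<le> 1 - \<beta>" "1 - \<beta> \<le> 1" using beta_nonneg beta_less_1 by auto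
  then show ?thesis
    by (simp add: cut_code_def keep_prob_def nn_integral_bernoulli_pmf ennreal_mult'[symmetric])
qed

lemma prob_error_cut_code:
  assumes "D (bin_enc r) = return_pmf x"
  shows "measure_pmf.prob (bind_pmf (cut_code r) D) (UNIV - {x}) \<le> 1 - keep_prob (length (bin_enc r))"
proof -
  have p: "0 \<le> 1 - \<beta>" "1 - \<beta> \<le> 1" using beta_nonneg beta_less_1 by auto
  have "measure_pmf.prob (bind_pmf (cut_code r) D) (UNIV - {x}) = 1 - pmf (bind_pmf (cut_code r) D) x"
    using measure_pmf.prob_compl[of "{x}"] by (simp add: measure_pmf_single)
  moreover have "keep_prob (length (bin_enc r)) \<le> pmf (bind_pmf (cut_code r) D) x"
  proof (cases "ereal (real (length (bin_enc r))) < \<eta> \<or> ereal (real (length (bin_enc r))) = \<eta>")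
    case True
    then show ?thesis
      using assms p
      by (auto simp: cut_code_def keep_prob_def bind_return_pmf bind_map_pmf pmf_bind
          integral_bernoulli_pmf)
  qed (simp add: keep_prob_def)
  ultimately show ?thesis by simp
qed

lemma exists_avg_code_tail_bound: "\<exists>F G. avg_code M X Y N tail_bound eps F G"
proof -
  obtain F G where F: "\<And>x w. (\<lambda>y. pmf (F x y) w) \<in> borel_measurable N"
    and G: "\<And>w x. (\<lambda>y. pmf (G w y) x) \<in> borel_measurable N"
    and G_range: "\<And>w y. set_pmf (G w y) \<subseteq> {1..}"
    and F_rank: "\<And>\<omega>. \<omega> \<in> space M \<Longrightarrow> F (X \<omega>) (Y \<omega>) = cut_code (rank \<omega>)"
    and G_rank: "\<And>\<omega>. \<omega> \<in> space M \<Longrightarrow> G (bin_enc (rank \<omega>)) (Y \<omega>) = return_pmf (X \<omega>)"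
    using exists_rank_encoder_decoder[of cut_code] by blast
  have "(\<integral>\<^sup>+\<omega>. (\<integral>\<^sup>+w. real (length w) \<partial>F (X \<omega>) (Y \<omega>)) \<partial>M)
      = (\<integral>\<^sup>+\<omega>. ennreal (real (opt_len \<omega>) * keep_prob (opt_len \<omega>)) \<partial>M)"
    by (intro nn_integral_cong) (simp add: F_rank nn_integral_length_cut_code opt_len_def)
  then have length: "(\<integral>\<^sup>+\<omega>. (\<integral>\<^sup>+w. real (length w) \<partial>F (X \<omega>) (Y \<omega>)) \<partial>M) = tail_bound"
    by (simp add: nn_integral_opt_len_keep_prob)
  have "(\<integral>\<^sup>+\<omega>. measure_pmf.prob (bind_pmf (F (X \<omega>) (Y \<omega>)) (\<lambda>w. G w (Y \<omega>))) (UNIV - {X \<omega>}) \<partial>M)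
      \<le> (\<integral>\<^sup>+\<omega>. drop_prob \<omega> \<partial>M)"
  proof (intro nn_integral_mono ennreal_leI)
    fix \<omega> assume \<omega>: "\<omega> \<in> space M"
    show "measure_pmf.prob (bind_pmf (F (X \<omega>) (Y \<omega>)) (\<lambda>w. G w (Y \<omega>))) (UNIV - {X \<omega>}) \<le> drop_prob \<omega>"
      using prob_error_cut_code[where D="\<lambda>w. G w (Y \<omega>)", OF G_rank[OF \<omega>]] keep_prob_opt_len[OF \<omega>]
      by (simp add: F_rank[OF \<omega>] opt_len_def)
  qed
  also have "\<dots> = ennreal (\<integral>\<omega>. drop_prob \<omega> \<partial>M)"
    by (rule nn_integral_eq_integral[OF integrable_drop_prob]) (simp add: drop_prob_def beta_nonneg)
  also have "\<dots> = ennreal eps" by (simp add: integral_drop_prob)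
  finally have "avg_code M X Y N tail_bound eps F G"
    unfolding avg_code_def using F G G_range length by auto
  then show ?thesis by blast
qed

lemma L_avg_star_eq_tail_bound: "L_avg_star M X Y N eps = tail_bound"
proof -
  define S where "S = {ennreal L | L. L > 0 \<and> (\<exists>F G. avg_code M X Y N (ennreal L) eps F G)}"
  obtain F G where code: "avg_code M X Y N tail_bound eps F G"
    using exists_avg_code_tail_bound by blast
  have "Inf S \<le> tail_bound"
  proof (rule ennreal_le_epsilon)
    fix e :: real assume "tail_bound < top" "0 < e"
    then obtain l where l: "0 \<le> l" "tail_bound = ennreal l" by (cases tail_bound) auto
    have "avg_code M X Y N (ennreal (l + e)) eps F G"
      using code l \<open>0 < e\<close> unfolding avg_code_def by (auto intro: order_trans ennreal_leI)
    moreover have "0 < l + e" using l \<open>0 < e\<close> by simp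
    ultimately have "ennreal (l + e) \<in> S" unfolding S_def by blast
    then have "Inf S \<le> ennreal (l + e)" by (rule Inf_lower)
    then show "Inf S \<le> tail_bound + ennreal e" using l \<open>0 < e\<close> by (simp add: ennreal_plus)
  qed
  moreover have "tail_bound \<le> Inf S"
    unfolding S_def by (auto intro!: Inf_greatest dest: tail_bound_le_avg_code_length)
  ultimately show ?thesis unfolding L_avg_star_def S_def[symmetric] by (rule antisym)
qed

end

theorem lemma5:
  fixes M :: "'a measure" and N :: "'b measure"
    and X :: "'a \<Rightarrow> nat" and Y :: "'a \<Rightarrow> 'b"
    and \<sigma> :: "'a \<Rightarrow> nat \<Rightarrow> nat"
    and eps :: real and \<eta> :: ereal and \<beta> :: real
  assumes "prob_space M"
    and "X \<in> measurable M (count_space UNIV)"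
    and "Y \<in> measurable M N"
    and "\<forall>\<omega>\<in>space M. X \<omega> \<ge> 1"
    and "0 \<le> eps" and "eps \<le> 1"
    and "\<forall>\<omega>\<in>space M. bij_betw (\<sigma> \<omega>) {1..} {1..}"
    and "\<forall>i. (\<lambda>\<omega>. \<sigma> \<omega> i) \<in> measurable (vimage_algebra (space M) Y N) (count_space UNIV)"
    and "AE \<omega> in M. \<forall>i\<ge>1. cond_pmf M X Y N (\<sigma> \<omega> i) \<omega> \<ge> cond_pmf M X Y N (\<sigma> \<omega> (Suc i)) \<omega>"
    and "cutoff_params M (\<lambda>\<omega>. real_of_int \<lfloor>log 2 (real (inv_into {1..} (\<sigma> \<omega>) (X \<omega>)))\<rfloor>) eps \<eta> \<beta>"
  shows "L_avg_star M X Y N eps =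
    cutoff_exp M (\<lambda>\<omega>. real_of_int \<lfloor>log 2 (real (inv_into {1..} (\<sigma> \<omega>) (X \<omega>)))\<rfloor>) \<eta> \<beta>"
proof -
  interpret ranked_source M X Y N \<sigma>
    by (rule ranked_source.intro[OF assms(1)], unfold_locales) (use assms in auto)
  have log_rank: "log_rank = (\<lambda>\<omega>. real_of_int \<lfloor>log 2 (real (inv_into {1..} (\<sigma> \<omega>) (X \<omega>)))\<rfloor>)"
    unfolding log_rank_def rank_def ..
  interpret cutoff_source M X Y N \<sigma> eps \<eta> \<beta>
    using assms(10) by unfold_locales (simp add: log_rank)
  show ?thesis
    using L_avg_star_eq_tail_bound cutoff_exp_eq_tail_bound by (simp add: log_rank)
qed

end
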